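(* Let $S$ be a numerical semigroup and let $b\in\mathrm U(\mathrm{Betti}(S))$. Then either $b$ is a minimal element of $(\mathrm{Betti}(S),\le_S)$ and all factorizations of $b$ are isolated, or the number $\mathrm i(b)$ of isolated factorizations of $b$ equals $\mathrm{nc}(\nabla_b)-1$.
   Context: A numerical semigroup $S$ is a submonoid of $(\mathbb N,+)$ with finite complement, minimally generated by $\{n_1,\dots,n_e\}$. Write $a\le_S b$ if $b-a\in S$. Let $\varphi:\mathbb N^e\to S$, $\varphi(a)=\sum_ia_in_i$; $\mathrm Z(s)=\varphi^{-1}(s)$. $\nabla_s$ is the graph on $\mathrm Z(s)$ with distinct $x,y$ adjacent iff $x\cdot y\ne0$; $\mathrm{nc}(\nabla_s)$ is its number of connected components; $s$ is a Betti element if $\nabla_s$ is disconnected; $\mathrm{Betti}(S)$ is the set of Betti elements. For a poset $(X,\le)$, $\mathrm U(X)=\{x\in X: \{y\in X:y\le x\}\text{ is totally ordered}\}$; here $X=(\mathrm{Betti}(S),\le_S)$. A factorization $z\in\mathrm Z(s)$ is isolated if $z\cdot x=0$ for all $x\in\mathrm Z(s)\setminus\{z\}$; $\mathrm i(s)$ is the number of isolated factorizations of $s$. *)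

theory Defs
  imports Main
begin

definition numerical_semigroup :: "nat set \<Rightarrow> bool" where
  "numerical_semigroup S \<longleftrightarrow> 0 \<in> S \<and> (\<forall>a\<in>S. \<forall>b\<in>S. a + b \<in> S) \<and> finite (- S)"

definition msg :: "nat set \<Rightarrow> nat set" where
  "msg S = {n \<in> S. n \<noteq> 0 \<and> \<not> (\<exists>a\<in>S. \<exists>b\<in>S. a \<noteq> 0 \<and> b \<noteq> 0 \<and> n = a + b)}"

definition factorizations :: "nat set \<Rightarrow> nat \<Rightarrow> (nat \<Rightarrow> nat) set" where
  "factorizations S s = {z. (\<forall>i. i \<notin> msg S \<longrightarrow> z i = 0) \<and> (\<Sum>i\<in>msg S. z i * i) = s}"

definition dotp :: "nat set \<Rightarrow> (nat \<Rightarrow> nat) \<Rightarrow> (nat \<Rightarrow> nat) \<Rightarrow> nat" where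
  "dotp S x y = (\<Sum>i\<in>msg S. x i * y i)"

definition nabla_edges :: "nat set \<Rightarrow> nat \<Rightarrow> ((nat \<Rightarrow> nat) \<times> (nat \<Rightarrow> nat)) set" where
  "nabla_edges S s = {(x, y). x \<in> factorizations S s \<and> y \<in> factorizations S s \<and> x \<noteq> y \<and> dotp S x y \<noteq> 0}"

definition nc :: "nat set \<Rightarrow> nat \<Rightarrow> nat" where
  "nc S s = card (factorizations S s // (nabla_edges S s)\<^sup>*)"

definition betti :: "nat set \<Rightarrow> nat set" where
  "betti S = {s \<in> S. nc S s > 1}"

definition leS :: "nat set \<Rightarrow> nat \<Rightarrow> nat \<Rightarrow> bool" where
  "leS S a b \<longleftrightarrow> a \<le> b \<and> b - a \<in> S"

definition U_betti :: "nat set \<Rightarrow> nat set" where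
  "U_betti S = {x \<in> betti S. \<forall>y\<in>betti S. \<forall>z\<in>betti S.
      leS S y x \<longrightarrow> leS S z x \<longrightarrow> leS S y z \<or> leS S z y}"

definition minimal_betti :: "nat set \<Rightarrow> nat \<Rightarrow> bool" where
  "minimal_betti S b \<longleftrightarrow> b \<in> betti S \<and> (\<forall>c\<in>betti S. leS S c b \<longrightarrow> c = b)"

definition isolated :: "nat set \<Rightarrow> nat \<Rightarrow> (nat \<Rightarrow> nat) \<Rightarrow> bool" where
  "isolated S s z \<longleftrightarrow> z \<in> factorizations S s \<and>
      (\<forall>x\<in>factorizations S s - {z}. dotp S z x = 0)"

definition num_isolated :: "nat set \<Rightarrow> nat \<Rightarrow> nat" where
  "num_isolated S s = card {z. isolated S s z}"

end

theory Submission
  imports Defs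
begin

text \<open>If two factorizations of \<open>s\<close> share a generator \<open>i\<close>, removing one copy of \<open>i\<close> from both
  gives two distinct factorizations of \<open>s - i\<close>, and descending further one reaches a Betti
  element \<open>c \<le>\<^sub>S s - i <\<^sub>S s\<close>. Hence a factorization of a minimal Betti element shares no
  generator with any other one. If \<open>b\<close> is not minimal, the Betti elements below \<open>b\<close> form a chain
  with least element \<open>c\<^sub>1\<close>; every non-isolated factorization of \<open>b\<close> can then be rewritten,
  within its component, to one extending a fixed factorization of \<open>c\<^sub>1\<close>. So all non-isolated
  factorizations lie in a single component, and the remaining components are the isolated ones.\<close>

lemma numerical_semigroup_zero: "numerical_semigroup S \<Longrightarrow> 0 \<in> S"
  by (simp add: numerical_semigroup_def)

lemma numerical_semigroup_add: "numerical_semigroup S \<Longrightarrow> a \<in> S \<Longrightarrow> b \<in> S \<Longrightarrow> a + b \<in> S"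
  by (simp add: numerical_semigroup_def)

lemma numerical_semigroup_mult: "numerical_semigroup S \<Longrightarrow> a \<in> S \<Longrightarrow> k * a \<in> S"
  by (induction k) (auto simp: numerical_semigroup_zero numerical_semigroup_add)

lemma numerical_semigroup_sum:
  assumes "numerical_semigroup S" "finite A" "\<And>i. i \<in> A \<Longrightarrow> f i \<in> S"
  shows "sum f A \<in> S"
  using assms(2,3)
  by (induction A rule: finite_induct)
    (auto simp: numerical_semigroup_zero[OF assms(1)] numerical_semigroup_add[OF assms(1)])

lemma leS_trans: "numerical_semigroup S \<Longrightarrow> leS S a b \<Longrightarrow> leS S b c \<Longrightarrow> leS S a c"
proof -
  assume ns: "numerical_semigroup S" and h: "leS S a b" "leS S b c"
  have eq: "c - a = (c - b) + (b - a)"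
    using h by (auto simp: leS_def)
  have "(c - b) + (b - a) \<in> S"
    using h numerical_semigroup_add[OF ns] unfolding leS_def by blast
  then show "leS S a c"
    using h eq by (auto simp: leS_def)
qed

lemma msg_subset: "msg S \<subseteq> S"
  by (auto simp: msg_def)

lemma msg_pos: "i \<in> msg S \<Longrightarrow> 0 < i"
  by (auto simp: msg_def)

lemma leS_diff_msg: "i \<in> msg S \<Longrightarrow> i \<le> s \<Longrightarrow> leS S (s - i) s"
  using msg_subset by (auto simp: leS_def)

lemma finite_msg:
  assumes "numerical_semigroup S"
  shows "finite (msg S)"
proof -
  have "finite (- S)"
    using assms by (simp add: numerical_semigroup_def)
  then obtain M where M: "\<And>x. x \<notin> S \<Longrightarrow> x \<le> M"
    by (auto simp: finite_nat_set_iff_bounded_le)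
  have "msg S \<subseteq> {..<2 * Suc M}"
  proof
    fix n assume n: "n \<in> msg S"
    show "n \<in> {..<2 * Suc M}"
    proof (rule ccontr)
      assume "n \<notin> {..<2 * Suc M}"
      then have "Suc M \<in> S" "n - Suc M \<in> S" "n = Suc M + (n - Suc M)" "n - Suc M \<noteq> 0"
        using M by fastforce+
      then show False
        using n unfolding msg_def by blast
    qed
  qed
  then show ?thesis
    by (rule finite_subset) simp
qed

lemma factorizations_in_semigroup:
  assumes "numerical_semigroup S" "z \<in> factorizations S s"
  shows "s \<in> S"
proof -
  have "(\<Sum>i\<in>msg S. z i * i) \<in> S"
    using msg_subset by (intro numerical_semigroup_sum[OF assms(1) finite_msg[OF assms(1)]]
        numerical_semigroup_mult[OF assms(1)]) auto
  then show ?thesis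
    using assms(2) by (simp add: factorizations_def)
qed

lemma factorizations_add:
  "a \<in> factorizations S s \<Longrightarrow> w \<in> factorizations S t \<Longrightarrow> (\<lambda>j. a j + w j) \<in> factorizations S (s + t)"
  by (auto simp: factorizations_def distrib_right sum.distrib)

lemma unit_factorization:
  assumes "finite (msg S)" "i \<in> msg S"
  shows "(\<lambda>j. if j = i then 1 else 0) \<in> factorizations S i"
proof -
  have "(\<Sum>j\<in>msg S. (if j = i then 1 else 0) * j) = (\<Sum>j\<in>msg S. if j = i then i else 0)"
    by (rule sum.cong) auto
  also have "\<dots> = i"
    using assms by simp
  finally show ?thesis
    using assms by (auto simp: factorizations_def)
qed

lemma factorizations_nonempty:
  assumes ns: "numerical_semigroup S"
  shows "s \<in> S \<Longrightarrow> factorizations S s \<noteq> {}"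
proof (induction s rule: less_induct)
  case (less s)
  consider "s = 0" | "s \<in> msg S" | a c where "a \<in> S" "c \<in> S" "a \<noteq> 0" "c \<noteq> 0" "s = a + c"
    using less.prems by (auto simp: msg_def)
  then show ?case
  proof cases
    case 1
    then have "(\<lambda>_. 0) \<in> factorizations S s"
      by (simp add: factorizations_def)
    then show ?thesis by blast
  next
    case 2
    then show ?thesis
      using unit_factorization[OF finite_msg[OF ns]] by blast
  next
    case (3 a c)
    then obtain za zc where "za \<in> factorizations S a" "zc \<in> factorizations S c"
      using less.IH[of a] less.IH[of c] by fastforce
    then show ?thesis
      using factorizations_add \<open>s = a + c\<close> by blast
  qed
qed

lemma finite_factorizations:
  assumes "numerical_semigroup S"
  shows "finite (factorizations S s)"
proof -
  have fm: "finite (msg S)"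
    by (rule finite_msg[OF assms])
  have "factorizations S s \<subseteq> {f. \<forall>x. (x \<in> msg S \<longrightarrow> f x \<in> {0..s}) \<and> (x \<notin> msg S \<longrightarrow> f x = 0)}"
  proof safe
    fix z x assume z: "z \<in> factorizations S s" and x: "x \<in> msg S"
    have "z x \<le> z x * x"
      using msg_pos[OF x] by simp
    also have "\<dots> \<le> (\<Sum>i\<in>msg S. z i * i)"
      by (rule member_le_sum[OF x _ fm]) simp
    finally show "z x \<in> {0..s}"
      using z by (simp add: factorizations_def)
  qed (simp add: factorizations_def)
  then show ?thesis
    by (rule finite_subset) (rule finite_set_of_finite_funs[OF fm], simp)
qed

lemma factorizations_zero:
  assumes "finite (msg S)" "z \<in> factorizations S 0"
  shows "z = (\<lambda>_. 0)"
proof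
  fix j
  have "j \<in> msg S \<Longrightarrow> z j * j = 0"
    using assms by (simp add: factorizations_def)
  then show "z j = 0"
    using assms(2) msg_pos by (fastforce simp: factorizations_def)
qed

lemma factorization_support:
  assumes "z \<in> factorizations S s" "s \<noteq> 0"
  obtains j where "j \<in> msg S" "0 < z j"
proof -
  have "\<exists>j\<in>msg S. 0 < z j"
  proof (rule ccontr)
    assume "\<not> (\<exists>j\<in>msg S. 0 < z j)"
    then have "(\<Sum>i\<in>msg S. z i * i) = 0"
      by simp
    then show False
      using assms by (simp add: factorizations_def)
  qed
  then show ?thesis
    using that by blast
qed

lemma factorizations_decrement:
  assumes "finite (msg S)" "x \<in> factorizations S s" "i \<in> msg S" "0 < x i"
  shows "x(i := x i - 1) \<in> factorizations S (s - i)" "i \<le> s"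
proof -
  have e: "x j * j = (x(i := x i - 1)) j * j + (if j = i then i else 0)" for j
    using assms(4) by (cases "j = i") (auto simp: diff_mult_distrib)
  have "s = (\<Sum>j\<in>msg S. x j * j)"
    using assms(2) by (simp add: factorizations_def)
  also have "\<dots> = (\<Sum>j\<in>msg S. (x(i := x i - 1)) j * j) + i"
    using assms(1,3) by (simp add: e sum.distrib)
  finally show "x(i := x i - 1) \<in> factorizations S (s - i)" "i \<le> s"
    using assms(2,3) by (auto simp: factorizations_def)
qed

lemma fun_upd_decrement_inject:
  fixes x y :: "'a \<Rightarrow> nat"
  assumes "x(i := x i - 1) = y(i := y i - 1)" "0 < x i" "0 < y i"
  shows "x = y"
proof
  fix j
  show "x j = y j"
    using fun_cong[OF assms(1), of j] assms(2,3) by (cases "j = i") auto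
qed

lemma dotp_neq_0_iff:
  "finite (msg S) \<Longrightarrow> dotp S x y \<noteq> 0 \<longleftrightarrow> (\<exists>i\<in>msg S. 0 < x i \<and> 0 < y i)"
  by (auto simp: dotp_def)

lemma sym_nabla_edges: "sym (nabla_edges S s)"
  by (auto simp: sym_def nabla_edges_def dotp_def mult.commute)

lemma isolated_iff_no_edge:
  "isolated S s z \<longleftrightarrow> z \<in> factorizations S s \<and> (\<forall>y. (z, y) \<notin> nabla_edges S s)"
  unfolding isolated_def nabla_edges_def by fastforce

lemma common_generator_rtrancl:
  assumes "finite (msg S)" "x \<in> factorizations S s" "y \<in> factorizations S s"
    "i \<in> msg S" "0 < x i" "0 < y i"
  shows "(x, y) \<in> (nabla_edges S s)\<^sup>*"
proof (cases "x = y")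
  case False
  then have "(x, y) \<in> nabla_edges S s"
    using assms dotp_neq_0_iff[OF assms(1)] by (auto simp: nabla_edges_def)
  then show ?thesis by simp
qed simp

lemma quotient_eq_image: "A // r = (\<lambda>x. r `` {x}) ` A"
  by (auto simp: quotient_def)

lemma betti_two_factorizations:
  assumes "numerical_semigroup S" "c \<in> betti S"
  obtains a0 a1 where "a0 \<in> factorizations S c" "a1 \<in> factorizations S c" "a0 \<noteq> a1"
proof -
  let ?Z = "factorizations S c"
  have "1 < card (?Z // (nabla_edges S c)\<^sup>*)"
    using assms(2) by (simp add: betti_def nc_def)
  also have "\<dots> \<le> card ?Z"
    unfolding quotient_eq_image by (rule card_image_le[OF finite_factorizations[OF assms(1)]])
  finally have "\<not> card ?Z \<le> Suc 0"
    by simp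
  then have "\<not> (\<forall>a0\<in>?Z. \<forall>a1\<in>?Z. a0 = a1)"
    using card_le_Suc0_iff_eq[OF finite_factorizations[OF assms(1)], of c] by blast
  then show ?thesis
    using that by blast
qed

lemma card_quotient_rtrancl_one_nontrivial_class:
  assumes "sym E" "finite A" "p \<in> A" "(p, q) \<in> E"
    and connected: "\<And>z y. z \<in> A \<Longrightarrow> (z, y) \<in> E \<Longrightarrow> (z, p) \<in> E\<^sup>*"
  shows "card (A // E\<^sup>*) = Suc (card {z \<in> A. \<forall>y. (z, y) \<notin> E})"
proof -
  define I where "I = {z \<in> A. \<forall>y. (z, y) \<notin> E}"
  have singleton: "E\<^sup>* `` {z} = {z}" if "z \<in> I" for z
    using that by (auto simp: I_def elim: converse_rtranclE)
  have same: "E\<^sup>* `` {z} = E\<^sup>* `` {p}" if "z \<in> A" "z \<notin> I" for z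
  proof -
    have "(z, p) \<in> E\<^sup>*" "(p, z) \<in> E\<^sup>*"
      using that connected symD[OF sym_rtrancl[OF assms(1)]] by (auto simp: I_def)
    then show ?thesis
      by (auto intro: rtrancl_trans)
  qed
  have "A // E\<^sup>* = insert (E\<^sup>* `` {p}) ((\<lambda>z. {z}) ` I)"
  proof
    show "A // E\<^sup>* \<subseteq> insert (E\<^sup>* `` {p}) ((\<lambda>z. {z}) ` I)"
    proof
      fix X assume "X \<in> A // E\<^sup>*"
      then obtain z where "z \<in> A" "X = E\<^sup>* `` {z}"
        unfolding quotient_eq_image by blast
      then show "X \<in> insert (E\<^sup>* `` {p}) ((\<lambda>z. {z}) ` I)"
        using singleton same by (cases "z \<in> I") auto
    qed
    have "I \<subseteq> A"
      by (auto simp: I_def)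
    then show "insert (E\<^sup>* `` {p}) ((\<lambda>z. {z}) ` I) \<subseteq> A // E\<^sup>*"
      unfolding quotient_eq_image using singleton assms(3) by (auto intro!: image_eqI)
  qed
  moreover have "E\<^sup>* `` {p} \<notin> (\<lambda>z. {z}) ` I"
  proof
    assume "E\<^sup>* `` {p} \<in> (\<lambda>z. {z}) ` I"
    then obtain z where "z \<in> I" "E\<^sup>* `` {p} = {z}"
      by blast
    moreover have "p \<in> E\<^sup>* `` {p}"
      by simp
    ultimately show False
      using assms(4) by (auto simp: I_def)
  qed
  moreover have "finite I"
    using assms(2) by (simp add: I_def)
  ultimately show ?thesis
    by (simp add: I_def card_image inj_on_def)
qed

lemma adjacent_factorizations_decrement:
  assumes "finite (msg S)" "(z, x) \<in> nabla_edges S s"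
  obtains i where "i \<in> msg S" "0 < z i" "i \<le> s"
    "z(i := z i - 1) \<in> factorizations S (s - i)" "x(i := x i - 1) \<in> factorizations S (s - i)"
    "z(i := z i - 1) \<noteq> x(i := x i - 1)"
proof -
  have z: "z \<in> factorizations S s" and x: "x \<in> factorizations S s" and "z \<noteq> x"
    and "dotp S z x \<noteq> 0"
    using assms(2) by (auto simp: nabla_edges_def)
  then obtain i where i: "i \<in> msg S" "0 < z i" "0 < x i"
    using dotp_neq_0_iff[OF assms(1)] by blast
  show ?thesis
  proof (rule that[OF i(1,2)])
    show "i \<le> s" "z(i := z i - 1) \<in> factorizations S (s - i)"
      using factorizations_decrement[OF assms(1) z i(1,2)] by simp_all
    show "x(i := x i - 1) \<in> factorizations S (s - i)"
      using factorizations_decrement[OF assms(1) x i(1,3)] by simp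
    show "z(i := z i - 1) \<noteq> x(i := x i - 1)"
      using fun_upd_decrement_inject[of z i x] i(2,3) \<open>z \<noteq> x\<close> by blast
  qed
qed

lemma betti_below_distinct_factorizations:
  assumes ns: "numerical_semigroup S"
  shows "u \<in> factorizations S s \<Longrightarrow> v \<in> factorizations S s \<Longrightarrow> u \<noteq> v \<Longrightarrow> \<exists>c\<in>betti S. leS S c s"
proof (induction s arbitrary: u v rule: less_induct)
  case (less s)
  have fm: "finite (msg S)"
    by (rule finite_msg[OF ns])
  show ?case
  proof (cases "s \<in> betti S")
    case True
    then show ?thesis
      using numerical_semigroup_zero[OF ns] by (auto simp: leS_def)
  next
    case False
    let ?E = "nabla_edges S s"
    have "card (factorizations S s // ?E\<^sup>*) \<le> Suc 0"
      using False factorizations_in_semigroup[OF ns less.prems(1)] by (simp add: betti_def nc_def)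
    moreover have "finite (factorizations S s // ?E\<^sup>*)"
      unfolding quotient_eq_image using finite_factorizations[OF ns] by blast
    ultimately have "\<forall>X\<in>factorizations S s // ?E\<^sup>*. \<forall>Y\<in>factorizations S s // ?E\<^sup>*. X = Y"
      using card_le_Suc0_iff_eq by blast
    then have "?E\<^sup>* `` {u} = ?E\<^sup>* `` {v}"
      using less.prems(1,2) by (simp add: quotientI)
    then have "(u, v) \<in> ?E\<^sup>*"
      by blast
    then obtain y where "(u, y) \<in> ?E"
      using less.prems(3) by (auto elim: converse_rtranclE)
    then obtain i where i: "i \<in> msg S" "i \<le> s"
      and "u(i := u i - 1) \<in> factorizations S (s - i)" "y(i := y i - 1) \<in> factorizations S (s - i)"
      and "u(i := u i - 1) \<noteq> y(i := y i - 1)"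
      by (rule adjacent_factorizations_decrement[OF fm])
    moreover have "s - i < s"
      using msg_pos[OF i(1)] i(2) by simp
    ultimately obtain c where "c \<in> betti S" "leS S c (s - i)"
      using less.IH by blast
    then show ?thesis
      using leS_diff_msg[OF i] leS_trans[OF ns] by blast
  qed
qed

lemma adjacent_factorizations_betti_below:
  assumes ns: "numerical_semigroup S" and "(z, x) \<in> nabla_edges S s"
  obtains i c where "i \<in> msg S" "0 < z i" "i \<le> s" "c \<in> betti S" "leS S c (s - i)"
proof -
  obtain i where "i \<in> msg S" "0 < z i" "i \<le> s"
    and "z(i := z i - 1) \<in> factorizations S (s - i)" "x(i := x i - 1) \<in> factorizations S (s - i)"
    and "z(i := z i - 1) \<noteq> x(i := x i - 1)"
    by (rule adjacent_factorizations_decrement[OF finite_msg[OF ns] assms(2)])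
  then show ?thesis
    using that betti_below_distinct_factorizations[OF ns] by blast
qed

lemma leS_strict_below:
  assumes "numerical_semigroup S" "leS S c (s - i)" "i \<in> msg S" "i \<le> s"
  shows "leS S c s" "c \<noteq> s"
  using leS_trans[OF assms(1,2) leS_diff_msg[OF assms(3,4)]] assms msg_pos[OF assms(3)]
  by (auto simp: leS_def)

lemma isolated_if_no_betti_strictly_below:
  assumes ns: "numerical_semigroup S" and "\<forall>c\<in>betti S. leS S c s \<longrightarrow> c = s"
    and "z \<in> factorizations S s"
  shows "isolated S s z"
  unfolding isolated_iff_no_edge
proof (intro conjI allI notI)
  fix y assume "(z, y) \<in> nabla_edges S s"
  then obtain i c where "i \<in> msg S" "i \<le> s" "c \<in> betti S" "leS S c (s - i)"
    by (rule adjacent_factorizations_betti_below[OF ns])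
  then show False
    using leS_strict_below[OF ns] assms(2) by blast
qed (rule assms(3))

lemma U_betti_least_betti_below:
  assumes ns: "numerical_semigroup S" and "b \<in> U_betti S"
    and "c0 \<in> betti S" "leS S c0 b" "c0 \<noteq> b"
  obtains c where "c \<in> betti S" "leS S c b" "c \<noteq> b"
    "\<forall>c'\<in>betti S. leS S c' b \<longrightarrow> leS S c c'"
proof -
  define c where "c = (LEAST c. c \<in> betti S \<and> leS S c b)"
  have c: "c \<in> betti S" "leS S c b"
    using LeastI[of "\<lambda>c. c \<in> betti S \<and> leS S c b" c0] assms(3,4) by (auto simp: c_def)
  have c_le: "c \<le> c'" if "c' \<in> betti S" "leS S c' b" for c'
    unfolding c_def using that by (auto intro: Least_le)
  have "leS S c c'" if "c' \<in> betti S" "leS S c' b" for c'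
  proof -
    have "leS S c c' \<or> leS S c' c"
      using assms(2) c that unfolding U_betti_def by blast
    then show ?thesis
      using c_le[OF that] numerical_semigroup_zero[OF ns] by (auto simp: leS_def)
  qed
  moreover have "c \<noteq> b"
    using c_le[OF assms(3,4)] assms(4,5) by (auto simp: leS_def)
  ultimately show ?thesis
    using that c by blast
qed

text \<open>The factorization \<open>w\<close> of \<open>s - c\<close> is nonzero, so it makes the two extensions adjacent.\<close>

lemma extension_not_isolated:
  assumes "finite (msg S)" "a0 \<in> factorizations S c" "a1 \<in> factorizations S c" "a0 \<noteq> a1"
    "w \<in> factorizations S (s - c)" "c < s"
  shows "\<not> isolated S s (\<lambda>j. a0 j + w j)"
proof
  assume iso: "isolated S s (\<lambda>j. a0 j + w j)"
  have "(\<lambda>j. a1 j + w j) \<in> factorizations S s"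
    using factorizations_add[OF assms(3,5)] assms(6) by simp
  moreover have "(\<lambda>j. a1 j + w j) \<noteq> (\<lambda>j. a0 j + w j)"
  proof
    assume eq: "(\<lambda>j. a1 j + w j) = (\<lambda>j. a0 j + w j)"
    have "a1 = a0"
    proof
      fix j
      show "a1 j = a0 j"
        using fun_cong[OF eq, of j] by simp
    qed
    then show False
      using assms(4) by simp
  qed
  moreover obtain k where "k \<in> msg S" "0 < w k"
    using factorization_support[OF assms(5)] assms(6) by auto
  then have "dotp S (\<lambda>j. a0 j + w j) (\<lambda>j. a1 j + w j) \<noteq> 0"
    using dotp_neq_0_iff[OF assms(1)] by auto
  ultimately show False
    using iso by (auto simp: isolated_def)
qed

text \<open>A non-isolated \<open>z\<close> shares a generator \<open>i\<close> with some factorization, so \<open>c \<le>\<^sub>S s - i\<close>;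
  then \<open>z\<close> shares \<open>i\<close> with an extension of \<open>a\<close>, which shares a generator of \<open>a\<close> with \<open>a + w\<close>.\<close>

lemma nonisolated_rtrancl_extension:
  assumes ns: "numerical_semigroup S"
    and a: "a \<in> factorizations S c" "c \<noteq> 0" "leS S c s"
    and least: "\<And>c'. c' \<in> betti S \<Longrightarrow> leS S c' s \<Longrightarrow> leS S c c'"
    and w: "w \<in> factorizations S (s - c)"
    and edge: "(z, y) \<in> nabla_edges S s"
  shows "(z, \<lambda>j. a j + w j) \<in> (nabla_edges S s)\<^sup>*"
proof -
  have fm: "finite (msg S)"
    by (rule finite_msg[OF ns])
  obtain i c' where i: "i \<in> msg S" "0 < z i" "i \<le> s" and c': "c' \<in> betti S" "leS S c' (s - i)"
    by (rule adjacent_factorizations_betti_below[OF ns edge])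
  have "leS S c (s - i)"
    using least[OF c'(1) leS_strict_below(1)[OF ns c'(2) i(1,3)]] c'(2) leS_trans[OF ns] by blast
  then have c_le: "c \<le> s - i" "s - i - c \<in> S"
    by (auto simp: leS_def)
  then obtain w' where w': "w' \<in> factorizations S (s - i - c)"
    using factorizations_nonempty[OF ns] by blast
  define q where "q = (\<lambda>t. a t + ((if t = i then 1 else 0) + w' t))"
  have "q \<in> factorizations S (c + (i + (s - i - c)))"
    unfolding q_def by (intro factorizations_add unit_factorization[OF fm i(1)] a(1) w')
  then have q: "q \<in> factorizations S s"
    using c_le i(3) by simp
  have z: "z \<in> factorizations S s"
    using edge by (simp add: nabla_edges_def)
  have aw: "(\<lambda>j. a j + w j) \<in> factorizations S s"
    using factorizations_add[OF a(1) w] a(3) by (simp add: leS_def)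
  obtain j where j: "j \<in> msg S" "0 < a j"
    using factorization_support[OF a(1,2)] by blast
  have "(z, q) \<in> (nabla_edges S s)\<^sup>*"
    by (rule common_generator_rtrancl[OF fm z q i(1,2)]) (simp add: q_def)
  also have "(q, \<lambda>j. a j + w j) \<in> (nabla_edges S s)\<^sup>*"
    by (rule common_generator_rtrancl[OF fm q aw j(1)]) (use j in \<open>simp_all add: q_def\<close>)
  finally show ?thesis .
qed

theorem theorem5p9:
  fixes S :: "nat set" and b :: nat
  assumes "numerical_semigroup S"
    and "b \<in> U_betti S"
  shows "(minimal_betti S b \<and> (\<forall>z\<in>factorizations S b. isolated S b z))
         \<or> num_isolated S b = nc S b - 1"
proof (cases "\<exists>c\<in>betti S. leS S c b \<and> c \<noteq> b")
  case False
  moreover have "b \<in> betti S"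
    using assms(2) by (simp add: U_betti_def)
  ultimately show ?thesis
    using isolated_if_no_betti_strictly_below[OF assms(1)] by (auto simp: minimal_betti_def)
next
  case True
  then obtain c0 where "c0 \<in> betti S" "leS S c0 b" "c0 \<noteq> b"
    by blast
  then obtain c where c: "c \<in> betti S" "leS S c b" "c \<noteq> b"
    and least: "\<forall>c'\<in>betti S. leS S c' b \<longrightarrow> leS S c c'"
    by (rule U_betti_least_betti_below[OF assms])
  obtain a0 a1 where a: "a0 \<in> factorizations S c" "a1 \<in> factorizations S c" "a0 \<noteq> a1"
    by (rule betti_two_factorizations[OF assms(1) c(1)])
  have "c \<noteq> 0"
    using a factorizations_zero[OF finite_msg[OF assms(1)]] by metis
  obtain w where w: "w \<in> factorizations S (b - c)"
    using factorizations_nonempty[OF assms(1)] c(2) by (auto simp: leS_def)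
  have p: "(\<lambda>j. a0 j + w j) \<in> factorizations S b"
    using factorizations_add[OF a(1) w] c(2) by (simp add: leS_def)
  moreover obtain q where "((\<lambda>j. a0 j + w j), q) \<in> nabla_edges S b"
    using extension_not_isolated[OF finite_msg[OF assms(1)] a w] c(2,3) p
    by (auto simp: leS_def isolated_iff_no_edge)
  ultimately have "card (factorizations S b // (nabla_edges S b)\<^sup>*)
      = Suc (card {z \<in> factorizations S b. \<forall>y. (z, y) \<notin> nabla_edges S b})"
    by (rule card_quotient_rtrancl_one_nontrivial_class[OF sym_nabla_edges
          finite_factorizations[OF assms(1)]])
      (rule nonisolated_rtrancl_extension[OF assms(1) a(1) \<open>c \<noteq> 0\<close> c(2) least[rule_format] w])
  then have "nc S b = Suc (num_isolated S b)"
    by (simp add: nc_def num_isolated_def isolated_iff_no_edge)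
  then show ?thesis
    by simp
qed

end
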